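(* Let $(V,\varphi,\xi,\eta,g)$ with $n\ge2$, the space $\mathcal{F}$, the inner product $\langle\cdot,\cdot\rangle$, the group $G$, the subspace $W_1$ and the subspaces $\mathcal{F}_1,\mathcal{F}_2,\mathcal{F}_3$ be as in the context. Then $W_1=\mathcal{F}_1\oplus\mathcal{F}_2\oplus\mathcal{F}_3$, the summands are mutually orthogonal with respect to $\langle\cdot,\cdot\rangle$, and each is invariant under the action of $G$.
   Context: Let $V$ be a real vector space of dimension $2n+1$ with an endomorphism $\varphi$, a vector $\xi$ and a linear form $\eta$ such that $\varphi\xi=0$, $\eta\circ\varphi=0$, $\eta(\xi)=1$, $\varphi^2=\mathrm{id}-\eta\otimes\xi$, and such that $\varphi$ restricted to $\mathbb{D}=\ker\eta$ has eigenvalues $\pm1$ with eigenspaces of equal dimension $n$. Let $g$ be a nondegenerate symmetric bilinear form on $V$ with $g(\varphi X,\varphi Y)=-g(X,Y)+\eta(X)\eta(Y)$; then $\eta(X)=g(X,\xi)$. Write $hX=X-\eta(X)\xi$. Fix a basis $\{e_1,\dots,e_{2n}\}$ of $\mathbb{D}$, write $Y=Y^ie_i+\eta(Y)\xi$. Let $\mathcal{F}$ be the vector space of all $(0,3)$-tensors of the form $F(X,Y,Z)=Y^ig(\mathcal{A}_{e_i}X,Z)+\eta(Y)g(\mathcal{A}_\xi X,\varphi Z)$, where $\mathcal{A}_{e_i}:V\to V$ and $\mathcal{A}_\xi:V\to\mathbb{D}$ are linear maps satisfying for all $X$, $i,j$: $g(\mathcal{A}_{e_i}X,e_j)=-g(\mathcal{A}_{e_j}X,e_i)$;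 $\mathcal{A}_{\varphi e_i}X=-\varphi(\mathcal{A}_{e_i}X)-g(\mathcal{A}_\xi X,e_i)\xi$ (index extended linearly); $\eta(\mathcal{A}_{e_i}X)=-g(\mathcal{A}_\xi X,\varphi e_i)$; $\eta(\mathcal{A}_\xi X)=0$. Inner product: $\langle F_1,F_2\rangle=g^{aq}g^{br}g^{cs}F_1(f_a,f_b,f_c)F_2(f_q,f_r,f_s)$ for a basis $\{f_a\}$ of $V$, $(g^{ab})$ inverse of $(g(f_a,f_b))$. For $F\in\mathcal{F}$ put $\theta_F(X)=g^{ab}F(f_a,f_b,X)$. $G$ is the group of linear automorphisms $a$ of $V$ with $a\varphi=\varphi a$, $a\xi=\xi$, $\eta\circ a=\eta$, $g(aX,aY)=g(X,Y)$, acting by $(\lambda(a)F)(X,Y,Z)=F(a^{-1}X,a^{-1}Y,a^{-1}Z)$. Let $W_1=\{F\in\mathcal{F}:F(X,Y,Z)=F(hX,hY,hZ)\ \forall X,Y,Z\}$. On $W_1$ define $m_1(F)(X,Y,Z)=\tfrac12\{F(X,Y,Z)-F(\varphi X,Y,\varphi Z)\}$ and $m_2(F)(X,Y,Z)=\tfrac12\{F(X,Y,Z)+F(\varphi X,Y,\varphi Z)\}$; $W_{11}=\mathrm{Im}\,m_1$, $\mathcal{F}_3=\mathrm{Im}\,m_2$. On $W_{11}$ define $m_3(F)(X,Y,Z)=F(X,Y,Z)-\frac{1}{2(n-1)}\{g(X,\varphi Y)\theta_F(\varphi Z)-g(X,\varphi Z)\theta_F(\varphi Y)-g(\varphi X,\varphi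 Y)\theta_F(Z)+g(\varphi X,\varphi Z)\theta_F(Y)\}$; $\mathcal{F}_1=\ker m_3$ and $\mathcal{F}_2=\mathrm{Im}\,m_3$ (subspaces of $W_{11}$). *)

theory Defs
  imports "HOL-Analysis.Analysis"
begin

text \<open>V is an arbitrary finite-dimensional real vector space, modelled as a type of class
  euclidean_space (its Basis is used as the basis {f_a} in the contractions).\<close>

type_synonym 'v tensor3 = "'v \<Rightarrow> 'v \<Rightarrow> 'v \<Rightarrow> real"

definition apm_structure ::
  "nat \<Rightarrow> ('v::euclidean_space \<Rightarrow> 'v) \<Rightarrow> 'v \<Rightarrow> ('v \<Rightarrow> real) \<Rightarrow> ('v \<Rightarrow> 'v \<Rightarrow> real) \<Rightarrow> bool"
  where
  "apm_structure n \<phi> \<xi> \<eta> g \<longleftrightarrow>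
     DIM('v) = 2 * n + 1 \<and>
     linear \<phi> \<and> linear \<eta> \<and>
     \<phi> \<xi> = 0 \<and> (\<forall>X. \<eta> (\<phi> X) = 0) \<and> \<eta> \<xi> = 1 \<and>
     (\<forall>X. \<phi> (\<phi> X) = X - \<eta> X *\<^sub>R \<xi>) \<and>
     dim {X. \<eta> X = 0 \<and> \<phi> X = X} = n \<and>
     dim {X. \<eta> X = 0 \<and> \<phi> X = - X} = n \<and>
     bilinear g \<and> (\<forall>X Y. g X Y = g Y X) \<and>
     (\<forall>X. (\<forall>Y. g X Y = 0) \<longrightarrow> X = 0) \<and>
     (\<forall>X Y. g (\<phi> X) (\<phi> Y) = - g X Y + \<eta> X * \<eta> Y)"

definition hmap :: "'v::real_vector \<Rightarrow> ('v \<Rightarrow> real) \<Rightarrow> 'v \<Rightarrow> 'v" where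
  "hmap \<xi> \<eta> X = X - \<eta> X *\<^sub>R \<xi>"

definition ginv :: "('v::euclidean_space \<Rightarrow> 'v \<Rightarrow> real) \<Rightarrow> 'v \<Rightarrow> 'v \<Rightarrow> real" where
  "ginv g = (SOME h. \<forall>a\<in>Basis. \<forall>c\<in>Basis.
               (\<Sum>b\<in>Basis. h a b * g b c) = (if a = c then 1 else 0))"

definition tensor_ip :: "('v::euclidean_space \<Rightarrow> 'v \<Rightarrow> real) \<Rightarrow> 'v tensor3 \<Rightarrow> 'v tensor3 \<Rightarrow> real" where
  "tensor_ip g F1 F2 =
     (\<Sum>a\<in>Basis. \<Sum>b\<in>Basis. \<Sum>c\<in>Basis. \<Sum>q\<in>Basis. \<Sum>r\<in>Basis. \<Sum>s\<in>Basis.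
        ginv g a q * ginv g b r * ginv g c s * F1 a b c * F2 q r s)"

definition theta :: "('v::euclidean_space \<Rightarrow> 'v \<Rightarrow> real) \<Rightarrow> 'v tensor3 \<Rightarrow> 'v \<Rightarrow> real" where
  "theta g F X = (\<Sum>a\<in>Basis. \<Sum>b\<in>Basis. ginv g a b * F a b X)"

text \<open>The space \<F>. The family A_{e_i}, extended linearly in the index over D = ker eta,
  is modelled as a bilinear map A with A Y X = A_Y X (only Y in D matters, since
  Y^i A_{e_i} = A_{hY}).\<close>
definition Fspace ::
  "('v::euclidean_space \<Rightarrow> 'v) \<Rightarrow> 'v \<Rightarrow> ('v \<Rightarrow> real) \<Rightarrow> ('v \<Rightarrow> 'v \<Rightarrow> real) \<Rightarrow> 'v tensor3 set"
  where
  "Fspace \<phi> \<xi> \<eta> g = {F. \<exists>(A :: 'v \<Rightarrow> 'v \<Rightarrow> 'v) (A\<xi> :: 'v \<Rightarrow> 'v).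
      bilinear A \<and> linear A\<xi> \<and> (\<forall>X. \<eta> (A\<xi> X) = 0) \<and>
      (\<forall>X Y W. \<eta> Y = 0 \<longrightarrow> \<eta> W = 0 \<longrightarrow> g (A Y X) W = - g (A W X) Y) \<and>
      (\<forall>X Y. \<eta> Y = 0 \<longrightarrow> A (\<phi> Y) X = - \<phi> (A Y X) - g (A\<xi> X) Y *\<^sub>R \<xi>) \<and>
      (\<forall>X Y. \<eta> Y = 0 \<longrightarrow> \<eta> (A Y X) = - g (A\<xi> X) (\<phi> Y)) \<and>
      F = (\<lambda>X Y Z. g (A (hmap \<xi> \<eta> Y) X) Z + \<eta> Y * g (A\<xi> X) (\<phi> Z))}"

definition Ggroup ::
  "('v::euclidean_space \<Rightarrow> 'v) \<Rightarrow> 'v \<Rightarrow> ('v \<Rightarrow> real) \<Rightarrow> ('v \<Rightarrow> 'v \<Rightarrow> real) \<Rightarrow> ('v \<Rightarrow> 'v) set"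
  where
  "Ggroup \<phi> \<xi> \<eta> g = {a. linear a \<and> bij a \<and> a \<circ> \<phi> = \<phi> \<circ> a \<and> a \<xi> = \<xi> \<and>
      \<eta> \<circ> a = \<eta> \<and> (\<forall>X Y. g (a X) (a Y) = g X Y)}"

definition act :: "('v \<Rightarrow> 'v) \<Rightarrow> 'v tensor3 \<Rightarrow> 'v tensor3" where
  "act a F = (\<lambda>X Y Z. F (inv a X) (inv a Y) (inv a Z))"

definition W1 ::
  "('v::euclidean_space \<Rightarrow> 'v) \<Rightarrow> 'v \<Rightarrow> ('v \<Rightarrow> real) \<Rightarrow> ('v \<Rightarrow> 'v \<Rightarrow> real) \<Rightarrow> 'v tensor3 set"
  where
  "W1 \<phi> \<xi> \<eta> g = {F \<in> Fspace \<phi> \<xi> \<eta> g.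
      \<forall>X Y Z. F X Y Z = F (hmap \<xi> \<eta> X) (hmap \<xi> \<eta> Y) (hmap \<xi> \<eta> Z)}"

definition m1 :: "('v \<Rightarrow> 'v) \<Rightarrow> 'v tensor3 \<Rightarrow> 'v tensor3" where
  "m1 \<phi> F = (\<lambda>X Y Z. (1/2) * (F X Y Z - F (\<phi> X) Y (\<phi> Z)))"

definition m2 :: "('v \<Rightarrow> 'v) \<Rightarrow> 'v tensor3 \<Rightarrow> 'v tensor3" where
  "m2 \<phi> F = (\<lambda>X Y Z. (1/2) * (F X Y Z + F (\<phi> X) Y (\<phi> Z)))"

definition m3 :: "nat \<Rightarrow> ('v::euclidean_space \<Rightarrow> 'v) \<Rightarrow> ('v \<Rightarrow> 'v \<Rightarrow> real) \<Rightarrow> 'v tensor3 \<Rightarrow> 'v tensor3" where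
  "m3 n \<phi> g F = (\<lambda>X Y Z. F X Y Z - (1 / (2 * (real n - 1))) *
      (g X (\<phi> Y) * theta g F (\<phi> Z) - g X (\<phi> Z) * theta g F (\<phi> Y)
       - g (\<phi> X) (\<phi> Y) * theta g F Z + g (\<phi> X) (\<phi> Z) * theta g F Y))"

definition W11 where "W11 \<phi> \<xi> \<eta> g = m1 \<phi> ` W1 \<phi> \<xi> \<eta> g"
definition F3 where "F3 \<phi> \<xi> \<eta> g = m2 \<phi> ` W1 \<phi> \<xi> \<eta> g"
definition F1 where "F1 n \<phi> \<xi> \<eta> g = {F \<in> W11 \<phi> \<xi> \<eta> g. m3 n \<phi> g F = (\<lambda>X Y Z. 0)}"
definition F2 where "F2 n \<phi> \<xi> \<eta> g = m3 n \<phi> g ` W11 \<phi> \<xi> \<eta> g"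

end

theory Submission
  imports Defs
begin

text \<open>
  A tensor lies in \<open>W1\<close> exactly when it is trilinear, horizontal, skew in its last two slots and
  satisfies \<open>F X (\<phi> Y) Z = F X Y (\<phi> Z)\<close>.  On such tensors \<open>F \<mapsto> F (\<phi> \<cdot>) \<cdot> (\<phi> \<cdot>)\<close> is an
  involution, and \<open>m1\<close>, \<open>m2\<close> are the projections onto its \<open>-1\<close> and \<open>+1\<close> eigenspaces
  \<open>W11\<close> and \<open>\<F>\<^sub>3\<close>.  On \<open>W11\<close> we have \<open>m3 F = F - \<psi>(\<theta>\<^sub>F) / (2(n - 1))\<close>, where \<open>\<psi>(\<theta>)\<close> is
  the tensor built from \<open>g\<close>, \<open>\<phi>\<close> and a 1-form \<open>\<theta>\<close>.  A trace computation shows that the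
  trace form of \<open>\<psi>(\<theta>)\<close> is \<open>2(n - 1) \<theta>\<close>, so \<open>m3\<close> is the projection onto the trace-free
  part of \<open>W11\<close>, along \<open>\<F>\<^sub>1\<close>, the image of \<open>\<psi>\<close>.

  Contractions are computed with the metric dual basis, \<open>g (dual a) X = X \<bullet> a\<close>.  Since the
  \<open>g\<close>-adjoint of \<open>\<phi>\<close> is \<open>-\<phi>\<close>, substituting \<open>\<phi>\<close> into both arguments of a trace only changes
  its sign; applied to the outer slots of \<open>\<langle>P, R\<rangle>\<close> this gives \<open>W11 \<perp> \<F>\<^sub>3\<close>.  The pairing
  \<open>\<langle>\<psi>(\<theta>), Q\<rangle>\<close> is a combination of traces of \<open>Q\<close>, which all vanish when \<open>Q\<close> is trace-free,
  so \<open>\<F>\<^sub>1 \<perp> \<F>\<^sub>2\<close>.  All constructions commute with the automorphisms of the structure, whence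
  the \<open>G\<close>-invariance.\<close>

definition trilinear :: "('a::real_vector \<Rightarrow> 'b::real_vector \<Rightarrow> 'c::real_vector \<Rightarrow> real) \<Rightarrow> bool" where
  "trilinear F \<longleftrightarrow> (\<forall>Y Z. linear (\<lambda>X. F X Y Z)) \<and> (\<forall>X Z. linear (\<lambda>Y. F X Y Z)) \<and>
     (\<forall>X Y. linear (\<lambda>Z. F X Y Z))"

lemma trilinearI:
  assumes "\<And>Y Z. linear (\<lambda>X. F X Y Z)" "\<And>X Z. linear (\<lambda>Y. F X Y Z)" "\<And>X Y. linear (\<lambda>Z. F X Y Z)"
  shows "trilinear F"
  using assms unfolding trilinear_def by blast

lemma
  assumes "trilinear F"
  shows trilinear_linear1: "linear (\<lambda>X. F X Y Z)"
    and trilinear_linear2: "linear (\<lambda>Y. F X Y Z)"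
    and trilinear_linear3: "linear (\<lambda>Z. F X Y Z)"
  using assms by (simp_all add: trilinear_def)

lemma linear_lincomb:
  fixes f k :: "'a::real_vector \<Rightarrow> real"
  assumes "linear f" and "linear k"
  shows "linear (\<lambda>x. a * f x + b * k x)"
  using assms by (intro linearI) (simp_all add: linear_add linear_scale algebra_simps)

lemma trilinear_lincomb:
  assumes "trilinear F" and "trilinear G"
  shows "trilinear (\<lambda>X Y Z. a * F X Y Z + b * G X Y Z)"
  by (intro trilinearI; rule linear_lincomb)
    (simp_all add: trilinear_linear1[OF assms(1)] trilinear_linear2[OF assms(1)] trilinear_linear3[OF assms(1)]
      trilinear_linear1[OF assms(2)] trilinear_linear2[OF assms(2)] trilinear_linear3[OF assms(2)])

lemma trilinear_compose:
  assumes "trilinear F" and "linear L" and "linear M" and "linear N"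
  shows "trilinear (\<lambda>X Y Z. F (L X) (M Y) (N Z))"
proof (rule trilinearI)
  fix X Y Z
  show "linear (\<lambda>X. F (L X) (M Y) (N Z))"
    using linear_compose[OF assms(2) trilinear_linear1[OF assms(1)]] by (simp add: o_def)
  show "linear (\<lambda>Y. F (L X) (M Y) (N Z))"
    using linear_compose[OF assms(3) trilinear_linear2[OF assms(1)]] by (simp add: o_def)
  show "linear (\<lambda>Z. F (L X) (M Y) (N Z))"
    using linear_compose[OF assms(4) trilinear_linear3[OF assms(1)]] by (simp add: o_def)
qed

lemma bilinear_mult:
  fixes u v :: "'a::real_vector \<Rightarrow> real"
  assumes "linear u" and "linear v"
  shows "bilinear (\<lambda>x y. u x * v y)"
  using assms unfolding bilinear_def
  by (intro conjI allI linearI) (simp_all add: linear_add linear_scale algebra_simps)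

lemma bilinear_compose_right:
  assumes "bilinear \<beta>" and "linear L"
  shows "bilinear (\<lambda>x y. \<beta> x (L y))"
  unfolding bilinear_def
proof (intro conjI allI)
  fix x y
  show "linear (\<lambda>y. \<beta> x (L y))"
    using linear_compose[OF assms(2), of "\<beta> x"] assms(1) by (simp add: bilinear_def o_def)
  show "linear (\<lambda>x. \<beta> x (L y))" using assms(1) by (simp add: bilinear_def)
qed

lemma linear_Basis_expansion:
  fixes u :: "'a::euclidean_space \<Rightarrow> real"
  assumes "linear u"
  shows "u v = (\<Sum>b\<in>Basis. (v \<bullet> b) * u b)"
proof -
  have "u v = u (\<Sum>b\<in>Basis. (v \<bullet> b) *\<^sub>R b)" by (simp add: euclidean_representation)
  also have "\<dots> = (\<Sum>b\<in>Basis. (v \<bullet> b) * u b)"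
    by (simp add: linear_sum[OF assms] linear_scale[OF assms])
  finally show ?thesis .
qed

lemma sum_rotate4:
  "(\<Sum>a\<in>A. \<Sum>b\<in>B. \<Sum>c\<in>C. \<Sum>d\<in>D. f a b c d) = (\<Sum>b\<in>B. \<Sum>c\<in>C. \<Sum>d\<in>D. \<Sum>a\<in>A. f a b c d)"
  by (subst sum.swap, rule sum.cong[OF refl], subst sum.swap, rule sum.cong[OF refl], rule sum.swap)


locale almost_paracontact_metric =
  fixes n :: nat and \<phi> :: "'v::euclidean_space \<Rightarrow> 'v" and \<xi> :: 'v
    and \<eta> :: "'v \<Rightarrow> real" and g :: "'v \<Rightarrow> 'v \<Rightarrow> real"
  assumes n_ge_2: "n \<ge> 2" and apm: "apm_structure n \<phi> \<xi> \<eta> g"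
begin

lemma DIM_eq: "DIM('v) = 2 * n + 1" using apm by (simp add: apm_structure_def)
lemma linear_phi: "linear \<phi>" using apm by (simp add: apm_structure_def)
lemma linear_eta: "linear \<eta>" using apm by (simp add: apm_structure_def)
lemma phi_xi [simp]: "\<phi> \<xi> = 0" using apm by (simp add: apm_structure_def)
lemma eta_phi [simp]: "\<eta> (\<phi> X) = 0" using apm by (simp add: apm_structure_def)
lemma eta_xi [simp]: "\<eta> \<xi> = 1" using apm by (simp add: apm_structure_def)
lemma phi_phi [simp]: "\<phi> (\<phi> X) = X - \<eta> X *\<^sub>R \<xi>" using apm by (simp add: apm_structure_def)
lemma bilinear_g: "bilinear g" using apm by (simp add: apm_structure_def)
lemma g_commute: "g X Y = g Y X" using apm by (simp add: apm_structure_def)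
lemma g_nondegenerate: "(\<And>Y. g X Y = 0) \<Longrightarrow> X = 0" using apm by (simp add: apm_structure_def)
lemma g_phi_phi: "g (\<phi> X) (\<phi> Y) = - g X Y + \<eta> X * \<eta> Y"
  using apm by (simp add: apm_structure_def)

lemmas phi_simps [simp] = linear_add[OF linear_phi] linear_diff[OF linear_phi]
  linear_scale[OF linear_phi] linear_0[OF linear_phi] linear_neg[OF linear_phi]
lemmas eta_simps [simp] = linear_add[OF linear_eta] linear_diff[OF linear_eta]
  linear_scale[OF linear_eta] linear_0[OF linear_eta] linear_neg[OF linear_eta]
lemmas g_simps [simp] = bilinear_ladd[OF bilinear_g] bilinear_radd[OF bilinear_g]
  bilinear_lmul[OF bilinear_g] bilinear_rmul[OF bilinear_g] bilinear_lsub[OF bilinear_g]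
  bilinear_rsub[OF bilinear_g] bilinear_lzero[OF bilinear_g] bilinear_rzero[OF bilinear_g]
  bilinear_lneg[OF bilinear_g] bilinear_rneg[OF bilinear_g]

lemma linear_g_left: "linear (\<lambda>X. g X Y)" using bilinear_g by (simp add: bilinear_def)
lemma linear_g_right: "linear (\<lambda>Y. g X Y)" using bilinear_g by (simp add: bilinear_def)

lemma g_xi_right [simp]: "g X \<xi> = \<eta> X"
  using g_phi_phi[of X \<xi>] by simp

lemma g_xi_left [simp]: "g \<xi> X = \<eta> X"
  using g_commute g_xi_right by metis

lemma g_phi_left [simp]: "g (\<phi> X) Y = - g X (\<phi> Y)"
  using g_phi_phi[of X "\<phi> Y"] by simp

section \<open>Metric duality\<close>

lemma g_eq_on_Basis_imp_eq: "(\<And>b. b \<in> Basis \<Longrightarrow> g X b = g Y b) \<Longrightarrow> X = Y"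
proof -
  assume "\<And>b. b \<in> Basis \<Longrightarrow> g X b = g Y b"
  then have "g (X - Y) Z = 0" for Z
    using linear_Basis_expansion[OF linear_g_right, of "X - Y" Z] by simp
  then show ?thesis using g_nondegenerate[of "X - Y"] by simp
qed

text \<open>Nondegeneracy makes \<open>w \<mapsto> g w\<close> injective, hence surjective onto the linear forms.\<close>
lemma ex_g_representative:
  assumes u: "linear u"
  shows "\<exists>w. \<forall>X. g w X = u X"
proof -
  define T where "T w = (\<Sum>b\<in>Basis. g w b *\<^sub>R b)" for w
  have "linear T" unfolding T_def
    by (intro linear_compose_sum ballI linearI) (simp_all add: scaleR_add_left)
  moreover have "inj T"
  proof (rule linear_injective_0[OF \<open>linear T\<close>, THEN iffD2], intro allI impI)
    fix w assume "T w = 0"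
    then have "g w b = g 0 b" if "b \<in> Basis" for b
      using that unfolding T_def euclidean_representation_sum by simp
    then show "w = 0" by (rule g_eq_on_Basis_imp_eq)
  qed
  ultimately obtain w where w: "T w = (\<Sum>b\<in>Basis. u b *\<^sub>R b)"
    by (metis linear_injective_imp_surjective surjD)
  then have "g w b = u b" if "b \<in> Basis" for b
    using that unfolding T_def by (simp add: euclidean_representation_sum_fun euclidean_representation_sum)
  then have "g w X = u X" for X
    using linear_Basis_expansion[OF linear_g_right[of w], of X] linear_Basis_expansion[OF u, of X] by simp
  then show ?thesis by blast
qed

definition dual :: "'v \<Rightarrow> 'v" where
  "dual a = (SOME w. \<forall>X. g w X = X \<bullet> a)"

lemma g_dual [simp]: "g (dual a) X = X \<bullet> a"
proof -
  have "linear (\<lambda>X. X \<bullet> a)" by (rule linearI) (simp_all add: inner_add_left)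
  from someI_ex[OF ex_g_representative[OF this]] show ?thesis unfolding dual_def by blast
qed

lemma inner_dual_commute: "dual a \<bullet> b = dual b \<bullet> a"
  using g_dual[of b "dual a"] g_dual[of a "dual b"] g_commute by metis

lemma sum_Basis_dual_eq:
  assumes "linear u" and "\<And>X. g w X = u X"
  shows "(\<Sum>a\<in>Basis. u a *\<^sub>R dual a) = w"
proof (rule g_eq_on_Basis_imp_eq)
  fix b :: 'v assume "b \<in> Basis"
  have "(\<Sum>a\<in>Basis. u a * (b \<bullet> a)) = u b"
    using linear_Basis_expansion[OF assms(1), of b] by (simp add: mult.commute)
  then show "g (\<Sum>a\<in>Basis. u a *\<^sub>R dual a) b = g w b"
    by (simp add: linear_sum[OF linear_g_left] assms(2))
qed

lemma sum_Basis_mult_dual: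
  assumes "linear u" and "linear v" and "\<And>X. g w X = u X"
  shows "(\<Sum>a\<in>Basis. u a * v (dual a)) = v w"
  by (subst sum_Basis_dual_eq[OF assms(1,3), symmetric])
    (simp add: linear_sum[OF assms(2)] linear_scale[OF assms(2)])

lemma ginv_eq_dual:
  assumes "a \<in> Basis" and "b \<in> Basis"
  shows "ginv g a b = dual a \<bullet> b"
proof -
  let ?inverse = "\<lambda>h::'v \<Rightarrow> 'v \<Rightarrow> real. \<forall>a\<in>Basis. \<forall>c\<in>Basis.
    (\<Sum>b\<in>Basis. h a b * g b c) = (if a = c then 1 else 0)"
  have "(\<Sum>b\<in>Basis. (dual a \<bullet> b) * g b c) = g (dual a) c" for a c
    using linear_Basis_expansion[OF linear_g_left[of c], of "dual a"] by simp
  then have "?inverse (\<lambda>a b. dual a \<bullet> b)" by (simp add: inner_Basis)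
  then have inv: "?inverse (ginv g)" unfolding ginv_def by (rule someI[of ?inverse])
  have "(\<Sum>b\<in>Basis. ginv g a b *\<^sub>R b) = dual a"
  proof (rule g_eq_on_Basis_imp_eq)
    fix c :: 'v assume "c \<in> Basis"
    then show "g (\<Sum>b\<in>Basis. ginv g a b *\<^sub>R b) c = g (dual a) c"
      using inv assms(1) by (simp add: linear_sum[OF linear_g_left] inner_Basis)
  qed
  then show ?thesis using assms(2) by (metis euclidean_representation_sum)
qed

section \<open>Metric trace of a bilinear form\<close>

definition metric_trace :: "('v \<Rightarrow> 'v \<Rightarrow> real) \<Rightarrow> real" where
  "metric_trace \<beta> = (\<Sum>a\<in>Basis. \<beta> a (dual a))"

lemma metric_trace_tensor:
  assumes "linear u" and "linear v" and "\<And>X. g w X = u X"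
  shows "metric_trace (\<lambda>x y. u x * v y) = v w"
  unfolding metric_trace_def by (rule sum_Basis_mult_dual[OF assms])

lemma metric_trace_adjoint:
  assumes "bilinear \<beta>" and "linear L" and adj: "\<And>x y. g (L' y) x = g y (L x)"
  shows "metric_trace (\<lambda>x y. \<beta> (L x) y) = metric_trace (\<lambda>x y. \<beta> x (L' y))"
proof -
  have lin1: "linear (\<lambda>x. \<beta> x y)" and lin2: "linear (\<lambda>y. \<beta> x y)" for x y
    using assms(1) by (simp_all add: bilinear_def)
  have lin: "linear (\<lambda>x. L x \<bullet> c)" for c
    using linear_compose[OF assms(2) bounded_linear_inner_left[THEN bounded_linear.linear]]
    by (simp add: o_def)
  have "metric_trace (\<lambda>x y. \<beta> (L x) y) = (\<Sum>a\<in>Basis. \<Sum>c\<in>Basis. (L a \<bullet> c) * \<beta> c (dual a))"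
    unfolding metric_trace_def by (intro sum.cong refl linear_Basis_expansion lin1)
  also have "\<dots> = (\<Sum>c\<in>Basis. \<Sum>a\<in>Basis. (L a \<bullet> c) * \<beta> c (dual a))" by (rule sum.swap)
  also have "\<dots> = metric_trace (\<lambda>x y. \<beta> x (L' y))"
    unfolding metric_trace_def
    by (intro sum.cong refl sum_Basis_mult_dual[OF lin lin2]) (simp add: adj)
  finally show ?thesis .
qed

lemma metric_trace_phi:
  assumes "bilinear \<beta>" and "\<And>x. \<beta> x \<xi> = 0"
  shows "metric_trace (\<lambda>x y. \<beta> (\<phi> x) (\<phi> y)) = - metric_trace \<beta>"
proof -
  have "metric_trace (\<lambda>x y. \<beta> (\<phi> x) (\<phi> y)) = metric_trace (\<lambda>x y. \<beta> x (\<phi> (- \<phi> y)))"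
    by (rule metric_trace_adjoint[OF bilinear_compose_right[OF assms(1) linear_phi] linear_phi]) simp
  also have "\<dots> = - metric_trace \<beta>"
    using assms by (simp add: metric_trace_def bilinear_rneg bilinear_rsub bilinear_rmul sum_negf)
  finally show ?thesis .
qed

lemma metric_trace_isometry:
  assumes "bilinear \<beta>" and "linear L" and "\<And>x. L (L' x) = x" and "\<And>x y. g (L x) (L y) = g x y"
  shows "metric_trace (\<lambda>x y. \<beta> (L x) (L y)) = metric_trace \<beta>"
proof -
  have "metric_trace (\<lambda>x y. \<beta> (L x) (L y)) = metric_trace (\<lambda>x y. \<beta> x (L (L' y)))"
    by (rule metric_trace_adjoint[OF bilinear_compose_right[OF assms(1,2)] assms(2)]) (metis assms(3,4))
  then show ?thesis by (simp add: assms(3))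
qed

lemma metric_trace_swap:
  assumes "bilinear \<beta>"
  shows "metric_trace (\<lambda>x y. \<beta> y x) = metric_trace \<beta>"
proof -
  have lin1: "linear (\<lambda>x. \<beta> x y)" and lin2: "linear (\<lambda>y. \<beta> x y)" for x y
    using assms(1) by (simp_all add: bilinear_def)
  have "metric_trace (\<lambda>x y. \<beta> y x) = (\<Sum>a\<in>Basis. \<Sum>b\<in>Basis. (dual a \<bullet> b) * \<beta> b a)"
    unfolding metric_trace_def by (intro sum.cong refl linear_Basis_expansion lin1)
  also have "\<dots> = (\<Sum>b\<in>Basis. \<Sum>a\<in>Basis. (dual b \<bullet> a) * \<beta> b a)"
    by (subst sum.swap) (simp add: inner_dual_commute)
  also have "\<dots> = metric_trace \<beta>"
    unfolding metric_trace_def by (intro sum.cong refl linear_Basis_expansion[symmetric] lin2)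
  finally show ?thesis .
qed

lemma metric_trace_skew:
  assumes "bilinear \<beta>" and "\<And>x y. \<beta> x y = - \<beta> y x"
  shows "metric_trace \<beta> = 0"
proof -
  have "metric_trace (\<lambda>x y. \<beta> y x) = - metric_trace \<beta>"
    unfolding metric_trace_def by (subst assms(2)) (simp add: sum_negf)
  then have "metric_trace \<beta> = - metric_trace \<beta>"
    using metric_trace_swap[OF assms(1)] by simp
  then show ?thesis by simp
qed

lemma metric_trace_g: "metric_trace g = real DIM('v)"
  by (simp add: metric_trace_def g_commute[of _ "dual _"])

section \<open>Tensors in W1\<close>

abbreviation h :: "'v \<Rightarrow> 'v" where "h \<equiv> hmap \<xi> \<eta>"

lemma h_phi [simp]: "h (\<phi> X) = \<phi> X" by (simp add: hmap_def)
lemma phi_h [simp]: "\<phi> (h X) = \<phi> X" by (simp add: hmap_def)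
lemma h_h [simp]: "h (h X) = h X" by (simp add: hmap_def)
lemma eta_h [simp]: "\<eta> (h X) = 0" by (simp add: hmap_def)
lemma h_xi [simp]: "h \<xi> = 0" by (simp add: hmap_def)
lemma linear_h: "linear h" by (rule linearI) (simp_all add: hmap_def scaleR_add_left scaleR_diff_right)

definition W1_tensor :: "'v tensor3 \<Rightarrow> bool" where
  "W1_tensor F \<longleftrightarrow> trilinear F \<and> (\<forall>X Y Z. F X Y Z = F (h X) (h Y) (h Z)) \<and>
     (\<forall>X Y Z. F X Y Z = - F X Z Y) \<and> (\<forall>X Y Z. F X (\<phi> Y) Z = F X Y (\<phi> Z))"

lemma W1_tensorI:
  assumes "trilinear F" "\<And>X Y Z. F X Y Z = F (h X) (h Y) (h Z)" "\<And>X Y Z. F X Y Z = - F X Z Y"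
    "\<And>X Y Z. F X (\<phi> Y) Z = F X Y (\<phi> Z)"
  shows "W1_tensor F"
  unfolding W1_tensor_def using assms by blast

lemma
  assumes "W1_tensor F"
  shows W1_tensor_trilinear: "trilinear F"
    and W1_tensor_horizontal: "F X Y Z = F (h X) (h Y) (h Z)"
    and W1_tensor_skew: "F X Y Z = - F X Z Y"
    and W1_tensor_phi: "F X (\<phi> Y) Z = F X Y (\<phi> Z)"
  using assms unfolding W1_tensor_def by blast+

lemma
  assumes "W1_tensor F"
  shows W1_tensor_xi1: "F \<xi> Y Z = 0"
    and W1_tensor_xi3: "F X Y \<xi> = 0"
  using W1_tensor_horizontal[OF assms, of \<xi> Y Z] W1_tensor_horizontal[OF assms, of X Y \<xi>]
    linear_0[OF trilinear_linear1[OF W1_tensor_trilinear[OF assms]]]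
    linear_0[OF trilinear_linear3[OF W1_tensor_trilinear[OF assms]]]
  by simp_all

lemma
  assumes "W1_tensor F"
  shows W1_tensor_h1: "F (h X) Y Z = F X Y Z"
    and W1_tensor_h2: "F X (h Y) Z = F X Y Z"
    and W1_tensor_h3: "F X Y (h Z) = F X Y Z"
proof -
  have hor: "F X Y Z = F (h X) (h Y) (h Z)" for X Y Z by (rule W1_tensor_horizontal[OF assms])
  show "F (h X) Y Z = F X Y Z" by (subst (1 2) hor) (simp only: h_h)
  show "F X (h Y) Z = F X Y Z" by (subst (1 2) hor) (simp only: h_h)
  show "F X Y (h Z) = F X Y Z" by (subst (1 2) hor) (simp only: h_h)
qed

lemma W1_imp_W1_tensor:
  assumes "F \<in> W1 \<phi> \<xi> \<eta> g"
  shows "W1_tensor F"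
proof -
  obtain A A\<xi> where A: "bilinear A" and L: "linear A\<xi>"
    and skew: "\<forall>X Y W. \<eta> Y = 0 \<longrightarrow> \<eta> W = 0 \<longrightarrow> g (A Y X) W = - g (A W X) Y"
    and phi: "\<forall>X Y. \<eta> Y = 0 \<longrightarrow> A (\<phi> Y) X = - \<phi> (A Y X) - g (A\<xi> X) Y *\<^sub>R \<xi>"
    and F: "F = (\<lambda>X Y Z. g (A (h Y) X) Z + \<eta> Y * g (A\<xi> X) (\<phi> Z))"
    and horizontal: "\<forall>X Y Z. F X Y Z = F (h X) (h Y) (h Z)"
    using assms unfolding W1_def Fspace_def by blast
  have F_h: "F X Y Z = g (A (h Y) (h X)) (h Z)" for X Y Z
    using horizontal F by simp
  show ?thesis
  proof (rule W1_tensorI)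
    show "trilinear F" unfolding F
      by (intro trilinearI linearI)
        (simp_all add: bilinear_ladd[OF A] bilinear_radd[OF A] bilinear_lmul[OF A] bilinear_rmul[OF A]
          linear_add[OF L] linear_scale[OF L] linear_add[OF linear_h] linear_scale[OF linear_h] algebra_simps)
    fix X Y Z
    show "F X Y Z = F (h X) (h Y) (h Z)" using horizontal by blast
    have "g (A (h Y) (h X)) (h Z) = - g (A (h Z) (h X)) (h Y)" using skew eta_h by blast
    then show "F X Y Z = - F X Z Y" by (simp add: F_h)
    have "A (\<phi> (h Y)) (h X) = - \<phi> (A (h Y) (h X)) - g (A\<xi> (h X)) (h Y) *\<^sub>R \<xi>"
      using phi eta_h by blast
    then show "F X (\<phi> Y) Z = F X Y (\<phi> Z)"
      by (simp add: F_h hmap_def[of _ _ Z])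
  qed
qed

text \<open>Conversely, a \<open>W1_tensor\<close> lies in \<open>\<F>\<close> with \<open>\<A>\<^sub>\<xi> = 0\<close> and \<open>\<A>\<^sub>Y X\<close> the metric dual of \<open>F X Y\<close>.\<close>
lemma W1_tensor_imp_W1:
  assumes W: "W1_tensor F"
  shows "F \<in> W1 \<phi> \<xi> \<eta> g"
proof -
  note T = W1_tensor_trilinear[OF W]
  define A where "A Y X = (\<Sum>a\<in>Basis. F X Y a *\<^sub>R dual a)" for Y X
  have g_A: "g (A Y X) Z = F X Y Z" for X Y Z
    using linear_Basis_expansion[OF trilinear_linear3[OF T, of X Y], of Z]
    by (simp add: A_def linear_sum[OF linear_g_left] mult.commute)
  have "bilinear A" unfolding bilinear_def A_def
    by (intro conjI allI linearI)
      (simp_all add: linear_add[OF trilinear_linear1[OF T]] linear_scale[OF trilinear_linear1[OF T]]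
        linear_add[OF trilinear_linear2[OF T]] linear_scale[OF trilinear_linear2[OF T]]
        scaleR_add_left sum.distrib scaleR_sum_right)
  moreover have "linear (\<lambda>X::'v. 0::'v)" by (rule linearI) simp_all
  moreover have "\<forall>X Y W. \<eta> Y = 0 \<longrightarrow> \<eta> W = 0 \<longrightarrow> g (A Y X) W = - g (A W X) Y"
    by (intro allI impI) (simp only: g_A, rule W1_tensor_skew[OF W])
  moreover have "\<forall>X Y. \<eta> Y = 0 \<longrightarrow> A (\<phi> Y) X = - \<phi> (A Y X) - g 0 Y *\<^sub>R \<xi>"
    by (intro allI impI g_eq_on_Basis_imp_eq) (simp add: g_A W1_tensor_phi[OF W])
  moreover have "\<forall>X Y. \<eta> Y = 0 \<longrightarrow> \<eta> (A Y X) = - g 0 (\<phi> Y)"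
    using g_A[of _ _ \<xi>] by (simp add: W1_tensor_xi3[OF W])
  moreover have "F = (\<lambda>X Y Z. g (A (h Y) X) Z + \<eta> Y * g 0 (\<phi> Z))"
    by (intro ext) (simp add: g_A W1_tensor_h2[OF W])
  ultimately have "F \<in> Fspace \<phi> \<xi> \<eta> g"
    unfolding Fspace_def by (intro CollectI exI[of _ A] exI[of _ "\<lambda>X. 0"]) (simp only: eta_simps simp_thms)
  then show ?thesis unfolding W1_def using W1_tensor_horizontal[OF W] by blast
qed

lemma mem_W1_iff: "F \<in> W1 \<phi> \<xi> \<eta> g \<longleftrightarrow> W1_tensor F"
  using W1_tensor_imp_W1 W1_imp_W1_tensor by blast

lemma W1_tensor_lincomb:
  assumes F: "W1_tensor F" and G: "W1_tensor G"
  shows "W1_tensor (\<lambda>X Y Z. a * F X Y Z + b * G X Y Z)"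
proof (rule W1_tensorI)
  show "trilinear (\<lambda>X Y Z. a * F X Y Z + b * G X Y Z)"
    using W1_tensor_trilinear[OF F] W1_tensor_trilinear[OF G] by (rule trilinear_lincomb)
  fix X Y Z
  show "a * F X Y Z + b * G X Y Z = a * F (h X) (h Y) (h Z) + b * G (h X) (h Y) (h Z)"
    using W1_tensor_horizontal[OF F, of X Y Z] W1_tensor_horizontal[OF G, of X Y Z] by simp
  show "a * F X Y Z + b * G X Y Z = - (a * F X Z Y + b * G X Z Y)"
    using W1_tensor_skew[OF F, of X Y Z] W1_tensor_skew[OF G, of X Y Z] by simp
  show "a * F X (\<phi> Y) Z + b * G X (\<phi> Y) Z = a * F X Y (\<phi> Z) + b * G X Y (\<phi> Z)"
    using W1_tensor_phi[OF F, of X Y Z] W1_tensor_phi[OF G, of X Y Z] by simp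
qed

lemma W1_tensor_phi_twist:
  assumes F: "W1_tensor F"
  shows "W1_tensor (\<lambda>X Y Z. F (\<phi> X) Y (\<phi> Z))"
proof (rule W1_tensorI)
  show "trilinear (\<lambda>X Y Z. F (\<phi> X) Y (\<phi> Z))"
    using trilinear_compose[OF W1_tensor_trilinear[OF F] linear_phi
        bounded_linear_ident[THEN bounded_linear.linear] linear_phi] .
  fix X Y Z
  show "F (\<phi> X) Y (\<phi> Z) = F (\<phi> (h X)) (h Y) (\<phi> (h Z))"
    using W1_tensor_horizontal[OF F, of "\<phi> X" Y "\<phi> Z"] by (simp only: h_phi phi_h)
  have "F (\<phi> X) Y (\<phi> Z) = - F (\<phi> X) (\<phi> Z) Y" by (rule W1_tensor_skew[OF F])
  also have "\<dots> = - F (\<phi> X) Z (\<phi> Y)" by (simp add: W1_tensor_phi[OF F])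
  finally show "F (\<phi> X) Y (\<phi> Z) = - F (\<phi> X) Z (\<phi> Y)" .
  show "F (\<phi> X) (\<phi> Y) (\<phi> Z) = F (\<phi> X) Y (\<phi> (\<phi> Z))" by (rule W1_tensor_phi[OF F])
qed

section \<open>The projections m1 and m2\<close>

definition phi_anti :: "'v tensor3 \<Rightarrow> bool" where
  "phi_anti F \<longleftrightarrow> (\<forall>X Y Z. F (\<phi> X) Y (\<phi> Z) = - F X Y Z)"

definition phi_symm :: "'v tensor3 \<Rightarrow> bool" where
  "phi_symm F \<longleftrightarrow> (\<forall>X Y Z. F (\<phi> X) Y (\<phi> Z) = F X Y Z)"

lemma phi_antiD: "phi_anti F \<Longrightarrow> F (\<phi> X) Y (\<phi> Z) = - F X Y Z"
  unfolding phi_anti_def by blast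

lemma phi_symmD: "phi_symm F \<Longrightarrow> F (\<phi> X) Y (\<phi> Z) = F X Y Z"
  unfolding phi_symm_def by blast

lemma phi_anti_lincomb: "phi_anti F \<Longrightarrow> phi_anti G \<Longrightarrow> phi_anti (\<lambda>X Y Z. a * F X Y Z + b * G X Y Z)"
  unfolding phi_anti_def by simp

lemma m1_lincomb: "m1 \<phi> F = (\<lambda>X Y Z. (1/2) * F X Y Z + (-1/2) * F (\<phi> X) Y (\<phi> Z))"
  unfolding m1_def by (intro ext) (simp add: algebra_simps)

lemma m2_lincomb: "m2 \<phi> F = (\<lambda>X Y Z. (1/2) * F X Y Z + (1/2) * F (\<phi> X) Y (\<phi> Z))"
  unfolding m2_def by (intro ext) (simp add: algebra_simps)

lemma W1_tensor_m1: "W1_tensor F \<Longrightarrow> W1_tensor (m1 \<phi> F)"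
  unfolding m1_lincomb by (intro W1_tensor_lincomb W1_tensor_phi_twist)

lemma W1_tensor_m2: "W1_tensor F \<Longrightarrow> W1_tensor (m2 \<phi> F)"
  unfolding m2_lincomb by (intro W1_tensor_lincomb W1_tensor_phi_twist)

lemma W1_tensor_phi_phi: "W1_tensor F \<Longrightarrow> F (\<phi> (\<phi> X)) Y (\<phi> (\<phi> Z)) = F X Y Z"
  using W1_tensor_h1[of F X Y "h Z"] W1_tensor_h3[of F X Y Z] by (simp only: phi_phi flip: hmap_def)

lemma phi_anti_m1: "W1_tensor F \<Longrightarrow> phi_anti (m1 \<phi> F)"
  unfolding phi_anti_def m1_def by (simp only: W1_tensor_phi_phi) (simp add: field_simps)

lemma phi_symm_m2: "W1_tensor F \<Longrightarrow> phi_symm (m2 \<phi> F)"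
  unfolding phi_symm_def m2_def by (simp only: W1_tensor_phi_phi) (simp add: field_simps)

lemma m1_phi_anti: "phi_anti F \<Longrightarrow> m1 \<phi> F = F"
  unfolding m1_def by (intro ext) (simp add: phi_antiD)

lemma m2_phi_anti: "phi_anti F \<Longrightarrow> m2 \<phi> F = (\<lambda>X Y Z. 0)"
  unfolding m2_def by (intro ext) (simp add: phi_antiD)

lemma m1_phi_symm: "phi_symm F \<Longrightarrow> m1 \<phi> F = (\<lambda>X Y Z. 0)"
  unfolding m1_def by (intro ext) (simp add: phi_symmD)

lemma m2_phi_symm: "phi_symm F \<Longrightarrow> m2 \<phi> F = F"
  unfolding m2_def by (intro ext) (simp add: phi_symmD)

lemma mem_W11_iff: "F \<in> W11 \<phi> \<xi> \<eta> g \<longleftrightarrow> W1_tensor F \<and> phi_anti F"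
proof
  assume "F \<in> W11 \<phi> \<xi> \<eta> g"
  then obtain G where "G \<in> W1 \<phi> \<xi> \<eta> g" and "F = m1 \<phi> G" unfolding W11_def by blast
  then show "W1_tensor F \<and> phi_anti F" using W1_tensor_m1 phi_anti_m1 mem_W1_iff by blast
next
  assume "W1_tensor F \<and> phi_anti F"
  then have "F = m1 \<phi> F" and "F \<in> W1 \<phi> \<xi> \<eta> g" using m1_phi_anti mem_W1_iff by auto
  then show "F \<in> W11 \<phi> \<xi> \<eta> g" unfolding W11_def by (rule image_eqI)
qed

lemma mem_F3_iff: "F \<in> F3 \<phi> \<xi> \<eta> g \<longleftrightarrow> W1_tensor F \<and> phi_symm F"
proof
  assume "F \<in> F3 \<phi> \<xi> \<eta> g"
  then obtain G where "G \<in> W1 \<phi> \<xi> \<eta> g" and "F = m2 \<phi> G" unfolding F3_def by blast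
  then show "W1_tensor F \<and> phi_symm F" using W1_tensor_m2 phi_symm_m2 mem_W1_iff by blast
next
  assume "W1_tensor F \<and> phi_symm F"
  then have "F = m2 \<phi> F" and "F \<in> W1 \<phi> \<xi> \<eta> g" using m2_phi_symm mem_W1_iff by auto
  then show "F \<in> F3 \<phi> \<xi> \<eta> g" unfolding F3_def by (rule image_eqI)
qed

section \<open>The trace form and the projection m3\<close>

lemma theta_eq_metric_trace:
  assumes "trilinear F"
  shows "theta g F X = metric_trace (\<lambda>a b. F a b X)"
  unfolding theta_def metric_trace_def
proof (rule sum.cong[OF refl])
  fix a :: 'v assume a: "a \<in> Basis"
  have "(\<Sum>b\<in>Basis. ginv g a b * F a b X) = (\<Sum>b\<in>Basis. (dual a \<bullet> b) * F a b X)"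
    by (rule sum.cong[OF refl]) (simp add: ginv_eq_dual a)
  also have "\<dots> = F a (dual a) X"
    by (rule linear_Basis_expansion[OF trilinear_linear2[OF assms], symmetric])
  finally show "(\<Sum>b\<in>Basis. ginv g a b * F a b X) = F a (dual a) X" .
qed

lemma linear_theta:
  assumes "trilinear F"
  shows "linear (theta g F)"
proof -
  have "theta g F = (\<lambda>X. \<Sum>a\<in>Basis. F a (dual a) X)"
    by (rule ext) (simp add: theta_eq_metric_trace[OF assms] metric_trace_def)
  moreover have "linear (\<lambda>X. \<Sum>a\<in>Basis. F a (dual a) X)"
    by (rule linear_compose_sum) (simp add: trilinear_linear3[OF assms])
  ultimately show ?thesis by simp
qed

lemma theta_xi: "W1_tensor F \<Longrightarrow> theta g F \<xi> = 0"
  by (simp add: theta_eq_metric_trace[OF W1_tensor_trilinear] W1_tensor_xi3 metric_trace_def)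

lemma theta_lincomb:
  "theta g (\<lambda>X Y Z. a * F X Y Z + b * G X Y Z) W = a * theta g F W + b * theta g G W"
  unfolding theta_def by (simp add: distrib_left sum.distrib sum_distrib_left mult.left_commute)

definition psi :: "('v \<Rightarrow> real) \<Rightarrow> 'v tensor3" where
  "psi \<theta> X Y Z = g X (\<phi> Y) * \<theta> (\<phi> Z) - g X (\<phi> Z) * \<theta> (\<phi> Y)
     - g (\<phi> X) (\<phi> Y) * \<theta> Z + g (\<phi> X) (\<phi> Z) * \<theta> Y"

lemma m3_eq_psi: "m3 n \<phi> g F = (\<lambda>X Y Z. F X Y Z - 1 / (2 * (real n - 1)) * psi (theta g F) X Y Z)"
  unfolding m3_def psi_def by (rule refl)

lemma psi_zero: "psi (\<lambda>_. 0) = (\<lambda>X Y Z. 0)"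
  by (intro ext) (simp add: psi_def)

lemma
  assumes th: "linear \<theta>" and th_xi: "\<theta> \<xi> = 0"
  shows W1_tensor_psi: "W1_tensor (psi \<theta>)"
    and phi_anti_psi: "phi_anti (psi \<theta>)"
proof -
  note th_simps = linear_add[OF th] linear_diff[OF th] linear_scale[OF th] linear_neg[OF th] th_xi
  show "W1_tensor (psi \<theta>)"
  proof (rule W1_tensorI)
    show "trilinear (psi \<theta>)"
      by (intro trilinearI linearI) (simp_all add: psi_def th_simps algebra_simps)
    fix X Y Z
    show "psi \<theta> X Y Z = psi \<theta> (h X) (h Y) (h Z)" by (simp add: psi_def hmap_def th_simps)
    show "psi \<theta> X Y Z = - psi \<theta> X Z Y" by (simp add: psi_def algebra_simps)
    show "psi \<theta> X (\<phi> Y) Z = psi \<theta> X Y (\<phi> Z)" by (simp add: psi_def th_simps algebra_simps)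
  qed
  show "phi_anti (psi \<theta>)"
    unfolding phi_anti_def by (simp add: psi_def th_simps algebra_simps)
qed

lemma metric_trace_g_phi: "metric_trace (\<lambda>x y. g x (\<phi> y)) = 0"
proof (rule metric_trace_skew[OF bilinear_compose_right[OF bilinear_g linear_phi]])
  fix x y
  have "g y (\<phi> x) = g (\<phi> x) y" by (rule g_commute)
  then show "g x (\<phi> y) = - g y (\<phi> x)" by simp
qed

lemma metric_trace_g_phi_phi: "metric_trace (\<lambda>x y. g (\<phi> x) (\<phi> y)) = 1 - real DIM('v)"
proof -
  have "metric_trace (\<lambda>x y. g (\<phi> x) (\<phi> y)) = - metric_trace g + metric_trace (\<lambda>x y. \<eta> x * \<eta> y)"
    unfolding metric_trace_def g_phi_phi by (simp only: sum.distrib sum_negf)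
  also have "metric_trace (\<lambda>x y. \<eta> x * \<eta> y) = \<eta> \<xi>"
    by (rule metric_trace_tensor[OF linear_eta linear_eta]) simp
  finally show ?thesis by (simp add: metric_trace_g)
qed

lemma theta_psi:
  assumes th: "linear \<theta>" and th_xi: "\<theta> \<xi> = 0"
  shows "theta g (psi \<theta>) Z = 2 * (real n - 1) * \<theta> Z"
proof -
  note th_simps = linear_diff[OF th] linear_scale[OF th] linear_neg[OF th] th_xi
  have lin_th_phi: "linear (\<lambda>y. \<theta> (\<phi> y))"
    using linear_compose[OF linear_phi th] by (simp add: o_def)
  have t2: "metric_trace (\<lambda>x y. g x (\<phi> Z) * \<theta> (\<phi> y)) = \<theta> Z"
    using metric_trace_tensor[OF linear_g_left lin_th_phi, of "\<phi> Z" "\<phi> Z"]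
    by (simp add: g_commute th_simps)
  have "metric_trace (\<lambda>x y. g (\<phi> x) (\<phi> Z) * \<theta> y) = metric_trace (\<lambda>x y. g x (- \<phi> (\<phi> Z)) * \<theta> y)"
    by (simp only: g_phi_left bilinear_rneg[OF bilinear_g])
  also have "\<dots> = \<theta> (- \<phi> (\<phi> Z))"
    by (rule metric_trace_tensor[OF linear_g_left th]) (rule g_commute)
  finally have t4: "metric_trace (\<lambda>x y. g (\<phi> x) (\<phi> Z) * \<theta> y) = - \<theta> Z"
    by (simp add: th_simps)
  have "theta g (psi \<theta>) Z = metric_trace (\<lambda>x y. g x (\<phi> y)) * \<theta> (\<phi> Z)
      - metric_trace (\<lambda>x y. g x (\<phi> Z) * \<theta> (\<phi> y))
      - metric_trace (\<lambda>x y. g (\<phi> x) (\<phi> y)) * \<theta> Z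
      + metric_trace (\<lambda>x y. g (\<phi> x) (\<phi> Z) * \<theta> y)"
    by (simp only: theta_eq_metric_trace[OF W1_tensor_trilinear[OF W1_tensor_psi[OF th th_xi]]]
        metric_trace_def psi_def sum_subtractf sum.distrib sum_distrib_right)
  also have "\<dots> = 2 * (real n - 1) * \<theta> Z"
    by (simp only: metric_trace_g_phi t2 metric_trace_g_phi_phi t4 DIM_eq) (simp add: algebra_simps)
  finally show ?thesis .
qed

lemma m3_lincomb:
  "m3 n \<phi> g (\<lambda>X Y Z. a * F X Y Z + b * G X Y Z) =
     (\<lambda>X Y Z. a * m3 n \<phi> g F X Y Z + b * m3 n \<phi> g G X Y Z)"
  unfolding m3_def theta_lincomb by (intro ext) (simp add: algebra_simps)

lemma m3_lincomb_psi:
  "m3 n \<phi> g F = (\<lambda>X Y Z. 1 * F X Y Z + (- 1 / (2 * (real n - 1))) * psi (theta g F) X Y Z)"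
  unfolding m3_eq_psi by (intro ext) simp

lemma theta_m3: "W1_tensor F \<Longrightarrow> theta g (m3 n \<phi> g F) W = 0"
  using n_ge_2 unfolding m3_lincomb_psi theta_lincomb
  by (simp add: theta_psi[OF linear_theta[OF W1_tensor_trilinear] theta_xi])

lemma m3_theta_zero:
  assumes "\<And>W. theta g F W = 0"
  shows "m3 n \<phi> g F = F"
proof -
  have "theta g F = (\<lambda>_. 0)" using assms by (rule ext)
  then show ?thesis by (simp add: m3_eq_psi psi_zero)
qed

lemma W1_tensor_m3: "W1_tensor F \<Longrightarrow> W1_tensor (m3 n \<phi> g F)"
  unfolding m3_lincomb_psi
  by (intro W1_tensor_lincomb W1_tensor_psi linear_theta W1_tensor_trilinear theta_xi)

lemma phi_anti_m3: "W1_tensor F \<Longrightarrow> phi_anti F \<Longrightarrow> phi_anti (m3 n \<phi> g F)"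
  unfolding m3_lincomb_psi
  by (intro phi_anti_lincomb phi_anti_psi linear_theta W1_tensor_trilinear theta_xi)

lemma mem_F1_iff: "P \<in> F1 n \<phi> \<xi> \<eta> g \<longleftrightarrow> W1_tensor P \<and> phi_anti P \<and> m3 n \<phi> g P = (\<lambda>X Y Z. 0)"
  unfolding F1_def mem_W11_iff by blast

lemma F1_eq_psi:
  assumes "P \<in> F1 n \<phi> \<xi> \<eta> g"
  shows "P = (\<lambda>X Y Z. 1 / (2 * (real n - 1)) * psi (theta g P) X Y Z)"
proof -
  have "m3 n \<phi> g P = (\<lambda>X Y Z. 0)" using assms mem_F1_iff by blast
  then show ?thesis unfolding m3_eq_psi by (metis (no_types, lifting) eq_iff_diff_eq_0)
qed

lemma mem_F2_iff: "Q \<in> F2 n \<phi> \<xi> \<eta> g \<longleftrightarrow> W1_tensor Q \<and> phi_anti Q \<and> (\<forall>W. theta g Q W = 0)"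
proof
  assume "Q \<in> F2 n \<phi> \<xi> \<eta> g"
  then obtain G where "G \<in> W11 \<phi> \<xi> \<eta> g" and "Q = m3 n \<phi> g G" unfolding F2_def by blast
  then show "W1_tensor Q \<and> phi_anti Q \<and> (\<forall>W. theta g Q W = 0)"
    using W1_tensor_m3 phi_anti_m3 theta_m3 mem_W11_iff by blast
next
  assume Q: "W1_tensor Q \<and> phi_anti Q \<and> (\<forall>W. theta g Q W = 0)"
  then have "Q = m3 n \<phi> g Q" using m3_theta_zero by simp
  moreover have "Q \<in> W11 \<phi> \<xi> \<eta> g" using Q mem_W11_iff by blast
  ultimately show "Q \<in> F2 n \<phi> \<xi> \<eta> g" unfolding F2_def by (rule image_eqI)
qed

section \<open>Orthogonality\<close>

lemma tensor_ip_commute: "tensor_ip g P Q = tensor_ip g Q P"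
proof -
  have ginv_commute: "ginv g a b = ginv g b a" if "a \<in> Basis" "b \<in> Basis" for a b
    using that by (simp add: ginv_eq_dual inner_dual_commute)
  let ?t = "\<lambda>a b c q r s. ginv g a q * ginv g b r * ginv g c s * P a b c * Q q r s"
  have "tensor_ip g P Q = (\<Sum>a\<in>Basis. \<Sum>b\<in>Basis. \<Sum>q\<in>Basis. \<Sum>r\<in>Basis. \<Sum>s\<in>Basis. \<Sum>c\<in>Basis. ?t a b c q r s)"
    unfolding tensor_ip_def by (rule sum.cong[OF refl], rule sum.cong[OF refl], rule sum_rotate4)
  also have "\<dots> = (\<Sum>a\<in>Basis. \<Sum>q\<in>Basis. \<Sum>r\<in>Basis. \<Sum>s\<in>Basis. \<Sum>b\<in>Basis. \<Sum>c\<in>Basis. ?t a b c q r s)"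
    by (rule sum.cong[OF refl], rule sum_rotate4)
  also have "\<dots> = (\<Sum>q\<in>Basis. \<Sum>r\<in>Basis. \<Sum>s\<in>Basis. \<Sum>a\<in>Basis. \<Sum>b\<in>Basis. \<Sum>c\<in>Basis. ?t a b c q r s)"
    by (rule sum_rotate4)
  also have "\<dots> = tensor_ip g Q P"
    unfolding tensor_ip_def by (intro sum.cong refl) (simp add: ginv_commute mult_ac)
  finally show ?thesis .
qed

lemma tensor_ip_dual:
  assumes "trilinear Q"
  shows "tensor_ip g P Q = (\<Sum>a\<in>Basis. \<Sum>b\<in>Basis. \<Sum>c\<in>Basis. P a b c * Q (dual a) (dual b) (dual c))"
  unfolding tensor_ip_def
proof (intro sum.cong refl)
  fix a b c :: 'v assume a: "a \<in> Basis" and b: "b \<in> Basis" and c: "c \<in> Basis"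
  have "P a b c * Q (dual a) (dual b) (dual c) = P a b c *
      (\<Sum>q\<in>Basis. (dual a \<bullet> q) * (\<Sum>r\<in>Basis. (dual b \<bullet> r) * (\<Sum>s\<in>Basis. (dual c \<bullet> s) * Q q r s)))"
    using assms
    by (simp flip: linear_Basis_expansion[OF trilinear_linear1] linear_Basis_expansion[OF trilinear_linear2]
        linear_Basis_expansion[OF trilinear_linear3])
  also have "\<dots> = (\<Sum>q\<in>Basis. \<Sum>r\<in>Basis. \<Sum>s\<in>Basis.
      ginv g a q * ginv g b r * ginv g c s * P a b c * Q q r s)"
    by (simp add: sum_distrib_left ginv_eq_dual a b c mult_ac)
  finally show "(\<Sum>q\<in>Basis. \<Sum>r\<in>Basis. \<Sum>s\<in>Basis. ginv g a q * ginv g b r * ginv g c s * P a b c * Q q r s)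
      = P a b c * Q (dual a) (dual b) (dual c)" by simp
qed

text \<open>Applying \<open>\<phi>\<close> to the first and last slots of both tensors leaves the pairing unchanged
  (\<open>metric_trace_phi\<close>, once per slot) but multiplies it by \<open>-1\<close> through the opposite parities.\<close>
lemma tensor_ip_phi_anti_phi_symm:
  assumes P: "W1_tensor P" "phi_anti P" and R: "W1_tensor R" "phi_symm R"
  shows "tensor_ip g P R = 0"
proof -
  note TP = W1_tensor_trilinear[OF P(1)] and TR = W1_tensor_trilinear[OF R(1)]
  define S where "S = (\<Sum>a\<in>Basis. \<Sum>b\<in>Basis. \<Sum>c\<in>Basis. P a b c * R (dual a) (dual b) (dual c))"
  have "S = (\<Sum>a\<in>Basis. \<Sum>b\<in>Basis. - (\<Sum>c\<in>Basis. P (\<phi> a) b (\<phi> c) * R (\<phi> (dual a)) (dual b) (\<phi> (dual c))))"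
    unfolding S_def by (simp add: phi_antiD[OF P(2)] phi_symmD[OF R(2)] sum_negf)
  also have "\<dots> = (\<Sum>a\<in>Basis. \<Sum>b\<in>Basis. \<Sum>c\<in>Basis. P (\<phi> a) b c * R (\<phi> (dual a)) (dual b) (dual c))"
  proof (intro sum.cong refl)
    fix a b
    have "metric_trace (\<lambda>x y. P (\<phi> a) b (\<phi> x) * R (\<phi> (dual a)) (dual b) (\<phi> y))
        = - metric_trace (\<lambda>x y. P (\<phi> a) b x * R (\<phi> (dual a)) (dual b) y)"
      by (rule metric_trace_phi[OF bilinear_mult[OF trilinear_linear3[OF TP] trilinear_linear3[OF TR]]])
        (simp add: W1_tensor_xi3[OF R(1)])
    then show "- (\<Sum>c\<in>Basis. P (\<phi> a) b (\<phi> c) * R (\<phi> (dual a)) (dual b) (\<phi> (dual c)))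
        = (\<Sum>c\<in>Basis. P (\<phi> a) b c * R (\<phi> (dual a)) (dual b) (dual c))"
      by (simp add: metric_trace_def)
  qed
  also have "\<dots> = (\<Sum>b\<in>Basis. \<Sum>c\<in>Basis. \<Sum>a\<in>Basis. P (\<phi> a) b c * R (\<phi> (dual a)) (dual b) (dual c))"
    by (subst sum.swap) (rule sum.cong[OF refl], rule sum.swap)
  also have "\<dots> = (\<Sum>b\<in>Basis. \<Sum>c\<in>Basis. - (\<Sum>a\<in>Basis. P a b c * R (dual a) (dual b) (dual c)))"
  proof (intro sum.cong refl)
    fix b c
    show "(\<Sum>a\<in>Basis. P (\<phi> a) b c * R (\<phi> (dual a)) (dual b) (dual c))
        = - (\<Sum>a\<in>Basis. P a b c * R (dual a) (dual b) (dual c))"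
      using metric_trace_phi[OF bilinear_mult[OF trilinear_linear1[OF TP] trilinear_linear1[OF TR]],
          of b c "dual b" "dual c"]
      by (simp add: W1_tensor_xi1[OF R(1)] metric_trace_def)
  qed
  also have "\<dots> = - S"
    unfolding S_def by (simp add: sum_negf) (subst sum.swap, rule sum.cong[OF refl], rule sum.swap)
  finally have "S = 0" by simp
  then show ?thesis unfolding S_def tensor_ip_dual[OF TR] .
qed

lemma
  assumes Q: "W1_tensor Q" and theta_Q: "\<And>W. theta g Q W = 0"
  shows W1_tensor_trace_phi12: "(\<Sum>b\<in>Basis. Q (\<phi> b) (dual b) W) = 0"
    and W1_tensor_trace12: "(\<Sum>b\<in>Basis. Q b (dual b) W) = 0"
    and W1_tensor_trace_phi13: "(\<Sum>c\<in>Basis. Q (\<phi> c) W (dual c)) = 0"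
    and W1_tensor_trace13: "(\<Sum>c\<in>Basis. Q c W (dual c)) = 0"
proof -
  note TQ = W1_tensor_trilinear[OF Q]
  have bil: "bilinear (\<lambda>x y. Q x y W)" for W
    unfolding bilinear_def using trilinear_linear1[OF TQ] trilinear_linear2[OF TQ] by blast
  have trace12: "metric_trace (\<lambda>x y. Q x y W) = 0" for W
    using theta_Q theta_eq_metric_trace[OF TQ] by simp
  have "metric_trace (\<lambda>x y. Q (\<phi> x) y W) = metric_trace (\<lambda>x y. Q x (- \<phi> y) W)" for W
    by (rule metric_trace_adjoint[OF bil linear_phi]) simp
  also have "\<dots> W = - metric_trace (\<lambda>x y. Q x y (\<phi> W))" for W
    by (simp add: metric_trace_def linear_neg[OF trilinear_linear2[OF TQ]] W1_tensor_phi[OF Q] sum_negf)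
  finally have trace_phi12: "metric_trace (\<lambda>x y. Q (\<phi> x) y W) = 0" for W
    by (simp add: trace12)
  show "(\<Sum>b\<in>Basis. Q (\<phi> b) (dual b) W) = 0" and "(\<Sum>b\<in>Basis. Q b (dual b) W) = 0"
    using trace_phi12 trace12 by (simp_all add: metric_trace_def)
  then show "(\<Sum>c\<in>Basis. Q (\<phi> c) W (dual c)) = 0" and "(\<Sum>c\<in>Basis. Q c W (dual c)) = 0"
    by (simp_all add: W1_tensor_skew[OF Q, of _ W] sum_negf)
qed

lemma sum_Basis_psi_contraction:
  assumes Q: "W1_tensor Q"
  shows "(\<Sum>a\<in>Basis. psi \<theta> a b c * Q (dual a) (dual b) (dual c)) =
    \<theta> (\<phi> c) * Q (\<phi> b) (dual b) (dual c) - \<theta> (\<phi> b) * Q (\<phi> c) (dual b) (dual c)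
    + \<theta> c * Q b (dual b) (dual c) - \<theta> b * Q c (dual b) (dual c)"
proof -
  have lin: "linear (\<lambda>y. Q y (dual b) (dual c))" by (rule trilinear_linear1[OF W1_tensor_trilinear[OF Q]])
  have contract_g: "(\<Sum>a\<in>Basis. g a W * Q (dual a) (dual b) (dual c)) = Q W (dual b) (dual c)" for W
    by (rule sum_Basis_mult_dual[OF linear_g_left lin]) (rule g_commute)
  have contract_g_phi: "(\<Sum>a\<in>Basis. g (\<phi> a) (\<phi> W) * Q (dual a) (dual b) (dual c)) = - Q W (dual b) (dual c)" for W
  proof -
    have "(\<Sum>a\<in>Basis. g (\<phi> a) (\<phi> W) * Q (dual a) (dual b) (dual c))
        = (\<Sum>a\<in>Basis. g a (- \<phi> (\<phi> W)) * Q (dual a) (dual b) (dual c))"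
      by (simp only: g_phi_left bilinear_rneg[OF bilinear_g])
    also have "\<dots> = - Q W (dual b) (dual c)"
      by (simp only: contract_g)
        (simp add: linear_neg[OF lin] linear_diff[OF lin] linear_scale[OF lin] W1_tensor_xi1[OF Q])
    finally show ?thesis .
  qed
  have "(\<Sum>a\<in>Basis. psi \<theta> a b c * Q (dual a) (dual b) (dual c)) =
      (\<Sum>a\<in>Basis. g a (\<phi> b) * Q (dual a) (dual b) (dual c)) * \<theta> (\<phi> c)
      - (\<Sum>a\<in>Basis. g a (\<phi> c) * Q (dual a) (dual b) (dual c)) * \<theta> (\<phi> b)
      - (\<Sum>a\<in>Basis. g (\<phi> a) (\<phi> b) * Q (dual a) (dual b) (dual c)) * \<theta> c
      + (\<Sum>a\<in>Basis. g (\<phi> a) (\<phi> c) * Q (dual a) (dual b) (dual c)) * \<theta> b"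
    unfolding psi_def sum_distrib_right
    by (simp only: sum_subtractf[symmetric] sum.distrib[symmetric])
      (rule sum.cong[OF refl], simp only: algebra_simps)
  then show ?thesis by (simp only: contract_g contract_g_phi) (simp add: algebra_simps)
qed

lemma tensor_ip_psi_theta_free:
  assumes Q: "W1_tensor Q" and theta_Q: "\<And>W. theta g Q W = 0"
  shows "tensor_ip g (psi \<theta>) Q = 0"
proof -
  note traces = W1_tensor_trace_phi12[OF Q theta_Q] W1_tensor_trace12[OF Q theta_Q]
    W1_tensor_trace_phi13[OF Q theta_Q] W1_tensor_trace13[OF Q theta_Q]
  have "tensor_ip g (psi \<theta>) Q =
      (\<Sum>b\<in>Basis. \<Sum>c\<in>Basis. \<Sum>a\<in>Basis. psi \<theta> a b c * Q (dual a) (dual b) (dual c))"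
    unfolding tensor_ip_dual[OF W1_tensor_trilinear[OF Q]]
    by (subst sum.swap) (rule sum.cong[OF refl], rule sum.swap)
  also have "\<dots> = (\<Sum>b\<in>Basis. \<Sum>c\<in>Basis. \<theta> (\<phi> c) * Q (\<phi> b) (dual b) (dual c))
     - (\<Sum>b\<in>Basis. \<theta> (\<phi> b) * (\<Sum>c\<in>Basis. Q (\<phi> c) (dual b) (dual c)))
     + (\<Sum>b\<in>Basis. \<Sum>c\<in>Basis. \<theta> c * Q b (dual b) (dual c))
     - (\<Sum>b\<in>Basis. \<theta> b * (\<Sum>c\<in>Basis. Q c (dual b) (dual c)))"
    by (simp only: sum_Basis_psi_contraction[OF Q] sum_subtractf sum.distrib sum_distrib_left)
  also have "(\<Sum>b\<in>Basis. \<Sum>c\<in>Basis. \<theta> (\<phi> c) * Q (\<phi> b) (dual b) (dual c)) = 0"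
    by (subst sum.swap) (simp add: sum_distrib_left[symmetric] traces)
  also have "(\<Sum>b\<in>Basis. \<Sum>c\<in>Basis. \<theta> c * Q b (dual b) (dual c)) = 0"
    by (subst sum.swap) (simp add: sum_distrib_left[symmetric] traces)
  finally show ?thesis by (simp add: traces)
qed

lemma F1_subset_W1: "F1 n \<phi> \<xi> \<eta> g \<subseteq> W1 \<phi> \<xi> \<eta> g"
  using mem_F1_iff mem_W1_iff by blast

lemma F2_subset_W1: "F2 n \<phi> \<xi> \<eta> g \<subseteq> W1 \<phi> \<xi> \<eta> g"
  using mem_F2_iff mem_W1_iff by blast

lemma F3_subset_W1: "F3 \<phi> \<xi> \<eta> g \<subseteq> W1 \<phi> \<xi> \<eta> g"
  using mem_F3_iff mem_W1_iff by blast

lemma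
  assumes P: "P \<in> F1 n \<phi> \<xi> \<eta> g" and "Q \<in> F2 n \<phi> \<xi> \<eta> g"
  shows tensor_ip_F1_F2: "tensor_ip g P Q = 0"
    and tensor_ip_F2_F1: "tensor_ip g Q P = 0"
proof -
  have Q: "W1_tensor Q" and theta_Q: "\<And>W. theta g Q W = 0" using assms(2) mem_F2_iff by blast+
  have "tensor_ip g P Q = 1 / (2 * (real n - 1)) * tensor_ip g (psi (theta g P)) Q"
    unfolding tensor_ip_dual[OF W1_tensor_trilinear[OF Q]]
    by (subst F1_eq_psi[OF P]) (simp add: sum_distrib_left mult.assoc)
  then show "tensor_ip g P Q = 0" by (simp add: tensor_ip_psi_theta_free[OF Q theta_Q])
  then show "tensor_ip g Q P = 0" by (simp add: tensor_ip_commute)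
qed

lemma
  assumes "P \<in> F1 n \<phi> \<xi> \<eta> g" and "R \<in> F3 \<phi> \<xi> \<eta> g"
  shows tensor_ip_F1_F3: "tensor_ip g P R = 0"
    and tensor_ip_F3_F1: "tensor_ip g R P = 0"
  using assms tensor_ip_phi_anti_phi_symm tensor_ip_commute mem_F1_iff mem_F3_iff by metis+

lemma
  assumes "Q \<in> F2 n \<phi> \<xi> \<eta> g" and "R \<in> F3 \<phi> \<xi> \<eta> g"
  shows tensor_ip_F2_F3: "tensor_ip g Q R = 0"
    and tensor_ip_F3_F2: "tensor_ip g R Q = 0"
  using assms tensor_ip_phi_anti_phi_symm tensor_ip_commute mem_F2_iff mem_F3_iff by metis+

section \<open>Invariance under G\<close>

lemma
  assumes "a \<in> Ggroup \<phi> \<xi> \<eta> g"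
  shows Ggroup_linear: "linear a"
    and Ggroup_surj: "a (inv a X) = X"
    and Ggroup_phi: "\<phi> (a X) = a (\<phi> X)"
    and Ggroup_xi: "a \<xi> = \<xi>"
    and Ggroup_eta: "\<eta> (a X) = \<eta> X"
    and Ggroup_g: "g (a X) (a Y) = g X Y"
  using assms unfolding Ggroup_def by (auto simp: fun_eq_iff bij_is_surj surj_f_inv_f)

lemma Ggroup_inv:
  assumes a: "a \<in> Ggroup \<phi> \<xi> \<eta> g"
  shows "inv a \<in> Ggroup \<phi> \<xi> \<eta> g"
proof -
  have bij: "bij a" using a unfolding Ggroup_def by blast
  have right_inv: "a (inv a X) = X" for X by (rule Ggroup_surj[OF a])
  have left_inv: "inv a (a X) = X" for X by (simp add: bij bij_is_inj)
  show ?thesis unfolding Ggroup_def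
  proof (intro CollectI conjI allI ext)
    show "linear (inv a)" by (rule inj_linear_imp_inv_linear[OF Ggroup_linear[OF a] bij_is_inj[OF bij]])
    show "bij (inv a)" by (rule bij_imp_bij_inv[OF bij])
    fix X Y
    show "(inv a \<circ> \<phi>) X = (\<phi> \<circ> inv a) X" by (metis comp_apply left_inv right_inv Ggroup_phi[OF a])
    show "inv a \<xi> = \<xi>" by (metis left_inv Ggroup_xi[OF a])
    show "(\<eta> \<circ> inv a) X = \<eta> X" by (metis comp_apply right_inv Ggroup_eta[OF a])
    show "g (inv a X) (inv a Y) = g X Y" by (metis right_inv Ggroup_g[OF a])
  qed
qed

context
  fixes b :: "'v \<Rightarrow> 'v"
  assumes b: "b \<in> Ggroup \<phi> \<xi> \<eta> g"
begin

lemma h_Ggroup: "h (b X) = b (h X)"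
  by (simp add: hmap_def Ggroup_xi[OF b] Ggroup_eta[OF b] linear_diff[OF Ggroup_linear[OF b]]
      linear_scale[OF Ggroup_linear[OF b]])

lemma trilinear_pullback: "trilinear F \<Longrightarrow> trilinear (\<lambda>X Y Z. F (b X) (b Y) (b Z))"
  using trilinear_compose Ggroup_linear[OF b] by blast

lemma W1_tensor_pullback:
  assumes F: "W1_tensor F"
  shows "W1_tensor (\<lambda>X Y Z. F (b X) (b Y) (b Z))"
proof (rule W1_tensorI)
  show "trilinear (\<lambda>X Y Z. F (b X) (b Y) (b Z))"
    by (rule trilinear_pullback[OF W1_tensor_trilinear[OF F]])
  fix X Y Z
  show "F (b X) (b Y) (b Z) = F (b (h X)) (b (h Y)) (b (h Z))"
    using W1_tensor_horizontal[OF F, of "b X" "b Y" "b Z"] by (simp only: h_Ggroup)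
  show "F (b X) (b Y) (b Z) = - F (b X) (b Z) (b Y)" by (rule W1_tensor_skew[OF F])
  show "F (b X) (b (\<phi> Y)) (b Z) = F (b X) (b Y) (b (\<phi> Z))"
    using W1_tensor_phi[OF F, of "b X" "b Y" "b Z"] by (simp only: Ggroup_phi[OF b])
qed

lemma phi_anti_pullback: "phi_anti F \<Longrightarrow> phi_anti (\<lambda>X Y Z. F (b X) (b Y) (b Z))"
  unfolding phi_anti_def by (simp flip: Ggroup_phi[OF b])

lemma phi_symm_pullback: "phi_symm F \<Longrightarrow> phi_symm (\<lambda>X Y Z. F (b X) (b Y) (b Z))"
  unfolding phi_symm_def by (simp flip: Ggroup_phi[OF b])

lemma theta_pullback:
  assumes T: "trilinear F"
  shows "theta g (\<lambda>X Y Z. F (b X) (b Y) (b Z)) W = theta g F (b W)"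
proof -
  have "bilinear (\<lambda>x y. F x y (b W))"
    unfolding bilinear_def using trilinear_linear1[OF T] trilinear_linear2[OF T] by blast
  from metric_trace_isometry[OF this Ggroup_linear[OF b] Ggroup_surj[OF b] Ggroup_g[OF b]]
  show ?thesis
    by (simp add: theta_eq_metric_trace[OF trilinear_pullback[OF T]] theta_eq_metric_trace[OF T])
qed

lemma m3_pullback:
  assumes "trilinear F"
  shows "m3 n \<phi> g (\<lambda>X Y Z. F (b X) (b Y) (b Z)) = (\<lambda>X Y Z. m3 n \<phi> g F (b X) (b Y) (b Z))"
  unfolding m3_def by (simp add: theta_pullback[OF assms] Ggroup_phi[OF b] Ggroup_g[OF b])

end

lemma act_F1: "a \<in> Ggroup \<phi> \<xi> \<eta> g \<Longrightarrow> P \<in> F1 n \<phi> \<xi> \<eta> g \<Longrightarrow> act a P \<in> F1 n \<phi> \<xi> \<eta> g"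
  unfolding mem_F1_iff act_def
  by (simp add: Ggroup_inv W1_tensor_pullback phi_anti_pullback m3_pullback W1_tensor_trilinear)

lemma act_F2: "a \<in> Ggroup \<phi> \<xi> \<eta> g \<Longrightarrow> Q \<in> F2 n \<phi> \<xi> \<eta> g \<Longrightarrow> act a Q \<in> F2 n \<phi> \<xi> \<eta> g"
  unfolding mem_F2_iff act_def
  by (simp add: Ggroup_inv W1_tensor_pullback phi_anti_pullback theta_pullback W1_tensor_trilinear)

lemma act_F3: "a \<in> Ggroup \<phi> \<xi> \<eta> g \<Longrightarrow> R \<in> F3 \<phi> \<xi> \<eta> g \<Longrightarrow> act a R \<in> F3 \<phi> \<xi> \<eta> g"
  unfolding mem_F3_iff act_def by (simp add: Ggroup_inv W1_tensor_pullback phi_symm_pullback)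

section \<open>The decomposition\<close>

lemma m3_idem: "W1_tensor G \<Longrightarrow> m3 n \<phi> g (m3 n \<phi> g G) = m3 n \<phi> g G"
  by (rule m3_theta_zero) (rule theta_m3)

lemma diff_m3_mem_F1:
  assumes "W1_tensor G" and "phi_anti G"
  shows "(\<lambda>X Y Z. G X Y Z - m3 n \<phi> g G X Y Z) \<in> F1 n \<phi> \<xi> \<eta> g"
proof -
  have diff: "(\<lambda>X Y Z. G X Y Z - m3 n \<phi> g G X Y Z) = (\<lambda>X Y Z. 1 * G X Y Z + (- 1) * m3 n \<phi> g G X Y Z)"
    by simp
  have "m3 n \<phi> g (\<lambda>X Y Z. 1 * G X Y Z + (- 1) * m3 n \<phi> g G X Y Z) = (\<lambda>X Y Z. 0)"
    unfolding m3_lincomb m3_idem[OF assms(1)] by simp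
  then show ?thesis unfolding mem_F1_iff diff
    using assms by (intro conjI W1_tensor_lincomb phi_anti_lincomb W1_tensor_m3 phi_anti_m3)
qed

lemma W1_decomposition_unique:
  assumes P: "P \<in> F1 n \<phi> \<xi> \<eta> g" and Q: "Q \<in> F2 n \<phi> \<xi> \<eta> g" and R: "R \<in> F3 \<phi> \<xi> \<eta> g"
    and F: "F = (\<lambda>X Y Z. P X Y Z + Q X Y Z + R X Y Z)"
  shows "P = (\<lambda>X Y Z. m1 \<phi> F X Y Z - m3 n \<phi> g (m1 \<phi> F) X Y Z)"
    and "Q = m3 n \<phi> g (m1 \<phi> F)" and "R = m2 \<phi> F"
proof -
  have P': "phi_anti P" "m3 n \<phi> g P = (\<lambda>X Y Z. 0)" using P mem_F1_iff by blast+
  have Q': "phi_anti Q" "m3 n \<phi> g Q = Q" using Q mem_F2_iff m3_theta_zero by blast+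
  have R': "phi_symm R" using R mem_F3_iff by blast
  have "m2 \<phi> F = (\<lambda>X Y Z. m2 \<phi> P X Y Z + m2 \<phi> Q X Y Z + m2 \<phi> R X Y Z)"
    unfolding F m2_def by (intro ext) (simp add: algebra_simps)
  then show "R = m2 \<phi> F" by (simp add: m2_phi_anti P'(1) Q'(1) m2_phi_symm R')
  have "m1 \<phi> F = (\<lambda>X Y Z. m1 \<phi> P X Y Z + m1 \<phi> Q X Y Z + m1 \<phi> R X Y Z)"
    unfolding F m1_def by (intro ext) (simp add: algebra_simps)
  then have m1_F: "m1 \<phi> F = (\<lambda>X Y Z. 1 * P X Y Z + 1 * Q X Y Z)"
    by (simp add: m1_phi_anti P'(1) Q'(1) m1_phi_symm R')
  then show "Q = m3 n \<phi> g (m1 \<phi> F)" unfolding m1_F m3_lincomb P'(2) Q'(2) by simp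
  then show "P = (\<lambda>X Y Z. m1 \<phi> F X Y Z - m3 n \<phi> g (m1 \<phi> F) X Y Z)" by (simp add: m1_F)
qed

lemma W1_decomposition:
  assumes "F \<in> W1 \<phi> \<xi> \<eta> g"
  shows "\<exists>!(P, Q, R). P \<in> F1 n \<phi> \<xi> \<eta> g \<and> Q \<in> F2 n \<phi> \<xi> \<eta> g \<and> R \<in> F3 \<phi> \<xi> \<eta> g \<and>
          F = (\<lambda>X Y Z. P X Y Z + Q X Y Z + R X Y Z)"
proof (rule ex1I[of _ "((\<lambda>X Y Z. m1 \<phi> F X Y Z - m3 n \<phi> g (m1 \<phi> F) X Y Z), m3 n \<phi> g (m1 \<phi> F), m2 \<phi> F)"])
  have m1_F: "m1 \<phi> F \<in> W11 \<phi> \<xi> \<eta> g" using assms unfolding W11_def by blast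
  have "(\<lambda>X Y Z. m1 \<phi> F X Y Z - m3 n \<phi> g (m1 \<phi> F) X Y Z) \<in> F1 n \<phi> \<xi> \<eta> g"
    using m1_F mem_W11_iff diff_m3_mem_F1 by blast
  moreover have "m3 n \<phi> g (m1 \<phi> F) \<in> F2 n \<phi> \<xi> \<eta> g" using m1_F unfolding F2_def by blast
  moreover have "m2 \<phi> F \<in> F3 \<phi> \<xi> \<eta> g" using assms unfolding F3_def by blast
  moreover have "F = (\<lambda>X Y Z. (m1 \<phi> F X Y Z - m3 n \<phi> g (m1 \<phi> F) X Y Z) + m3 n \<phi> g (m1 \<phi> F) X Y Z + m2 \<phi> F X Y Z)"
    unfolding m1_def m2_def by (intro ext) (simp add: algebra_simps)
  ultimately show "case ((\<lambda>X Y Z. m1 \<phi> F X Y Z - m3 n \<phi> g (m1 \<phi> F) X Y Z), m3 n \<phi> g (m1 \<phi> F), m2 \<phi> F) of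
      (P, Q, R) \<Rightarrow> P \<in> F1 n \<phi> \<xi> \<eta> g \<and> Q \<in> F2 n \<phi> \<xi> \<eta> g \<and> R \<in> F3 \<phi> \<xi> \<eta> g \<and>
        F = (\<lambda>X Y Z. P X Y Z + Q X Y Z + R X Y Z)" by simp
qed (use W1_decomposition_unique in auto)

end

theorem proposition3p4:
  fixes n :: nat and \<phi> :: "'v::euclidean_space \<Rightarrow> 'v" and \<xi> :: 'v
    and \<eta> :: "'v \<Rightarrow> real" and g :: "'v \<Rightarrow> 'v \<Rightarrow> real"
  assumes "n \<ge> 2" and "apm_structure n \<phi> \<xi> \<eta> g"
  defines "S \<equiv> [F1 n \<phi> \<xi> \<eta> g, F2 n \<phi> \<xi> \<eta> g, F3 \<phi> \<xi> \<eta> g]"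
  shows
    "(\<forall>i<3. S ! i \<subseteq> W1 \<phi> \<xi> \<eta> g) \<and>
     (\<forall>F \<in> W1 \<phi> \<xi> \<eta> g. \<exists>!(P, Q, R). P \<in> S ! 0 \<and> Q \<in> S ! 1 \<and> R \<in> S ! 2 \<and>
          F = (\<lambda>X Y Z. P X Y Z + Q X Y Z + R X Y Z)) \<and>
     (\<forall>i<3. \<forall>j<3. i \<noteq> j \<longrightarrow> (\<forall>P \<in> S ! i. \<forall>Q \<in> S ! j. tensor_ip g P Q = 0)) \<and>
     (\<forall>i<3. \<forall>a \<in> Ggroup \<phi> \<xi> \<eta> g. \<forall>P \<in> S ! i. act a P \<in> S ! i)"
proof -
  interpret almost_paracontact_metric n \<phi> \<xi> \<eta> g using assms(1,2) by unfold_locales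
  have forall_less_3: "(\<forall>i<3. A i) \<longleftrightarrow> A 0 \<and> A 1 \<and> A 2" for A :: "nat \<Rightarrow> bool"
    by (auto simp: numeral_3_eq_3 numeral_2_eq_2 less_Suc_eq)
  have "S ! 0 = F1 n \<phi> \<xi> \<eta> g" "S ! 1 = F2 n \<phi> \<xi> \<eta> g" "S ! 2 = F3 \<phi> \<xi> \<eta> g"
    unfolding S_def by simp_all
  then show ?thesis unfolding forall_less_3
    using F1_subset_W1 F2_subset_W1 F3_subset_W1 W1_decomposition
      tensor_ip_F1_F2 tensor_ip_F2_F1 tensor_ip_F1_F3 tensor_ip_F3_F1 tensor_ip_F2_F3 tensor_ip_F3_F2
      act_F1 act_F2 act_F3
    by simp
qed

end
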